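(* Let $\mathcal R$ be a strong CCTRS. If $s\in\mathcal T_{\mathrm p}(\mathcal H)$ is a proper ground term, then every $(\Xi(\mathcal R),\mu)$-normal form $t$ of $s$ (i.e., $s\to^*_{\Xi(\mathcal R),\mu}t$ and $t$ is irreducible with respect to $\to_{\Xi(\mathcal R),\mu}$) is a $\bot$-pattern.
   Context: A CCTRS over $\mathcal F$ is a set $\mathcal R$ of conditional rules each of the form $f(\ell_1,\dots,\ell_n)\to r\Leftarrow a_1\approx b_1,\dots,a_k\approx b_k$ (defined symbols are roots of left-hand sides, others constructors; constructor terms contain only constructors and variables) where $\ell_1,\dots,\ell_n,b_1,\dots,b_k$ are constructor terms, the terms $f(\ell_1,\dots,\ell_n),b_1,\dots,b_k$ pairwise share no variables, $\mathrm{Var}(r)\subseteq\mathrm{Var}(\ell_1,\dots,\ell_n,b_1,\dots,b_k)$, and $\mathrm{Var}(a_i)\subseteq\mathrm{Var}(\ell_1,\dots,\ell_n,b_1,\dots,b_{i-1})$. $\mathcal R{\restriction}f$ is the set of rules with left-hand root $f$. A strong CCTRS is a CCTRS with each $\mathcal R{\restriction}f$ finite and each $f(\ell_1,\dots,\ell_n)$ and $b_j$ linear. Let $m_f=|\mathcal R{\restriction}f|$ (0 for constructors), with fixed enumeration $\rho^f_1,\dots,\rho^f_{m_f}$. The transformed system: signature $\mathcal H$ with constants $\bot,\top$ ($\mu=\emptyset$); every $f\in\mathcal F$ of arity $n$ as a symbol of arity $n+m_f$ with $\mu(f)=\{1,\dots,n\}$; and for every defined $f$ of arity $n$, every $\rho^f_i$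 with $k>0$ conditions and $1\le j\le k$ a symbol $f_i^j$ of arity $n+m_f+j-1$ with $\mu(f_i^j)=\{n+i+j-1\}$. A position is active in $t$ if it is $\epsilon$ or $iq$ with $i\in\mu(\mathrm{root}(t))$ and $q$ active in $t|_i$; $\to_{\Xi(\mathcal R),\mu}$ rewrites only at active positions. $\xi_\star$ ($\star\in\{\bot,\top\}$): identity on variables, homomorphic on constructors, $f(t_1..t_n)\mapsto f(\xi_\star(t_1),\dots,\xi_\star(t_n),\star,\dots,\star)$ ($m_f$ copies) for defined $f$; a $\bot$-pattern is a linear term $\xi_\bot(t)$ with $t\in\mathcal T(\mathcal F,\mathcal V)$. For a linear constructor term $t$: $\mathrm{AP}(x)=\emptyset$, and $\mathrm{AP}(f(t_1,\dots,t_n))$ consists of $g(x_1,\dots,x_m)$ for every constructor $g\neq f$ of arity $m$, $g(x_1,\dots,x_m,\bot,\dots,\bot)$ for every defined $g$ of arity $m$, and $f(x_1,\dots,x_{i-1},u,x_{i+1},\dots,x_n)$ for $u\in\mathrm{AP}(t_i)$ (fresh distinct $x$'s). Notation: $\langle t_1,\dots,t_n\rangle[u_1,\dots,u_j]_i$ is $t_1,\dots,t_{i-1},u_1,\dots,u_j,t_{i+1},\dots,t_n$. For the $i$-th rule $\rho_i\colon f(\vec\ell)\to r\Leftarrow a_1\approx b_1,\dots,a_k\approx b_k$ of $\mathcal R{\restriction}f$ and fresh distinct $x_1,\dots,x_{m_f},y_1,\dots,y_n$, $\Xi(\mathcal R)$ contains: $(1)$ if $k=0$: $f(\vec\ell,\langle\vec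 x\rangle[\top]_i)\to\xi_\top(r)$; if $k>0$: $(2)$ $f(\vec\ell,\langle\vec x\rangle[\top]_i)\to f_i^1(\vec\ell,\langle\vec x\rangle[\xi_\top(a_1)]_i)$, $(3)$ $f_i^k(\vec\ell,\langle\vec x\rangle[b_1,\dots,b_k]_i)\to\xi_\top(r)$, $(4)$ for $1\le j<k$: $f_i^j(\vec\ell,\langle\vec x\rangle[b_1,\dots,b_j]_i)\to f_i^{j+1}(\vec\ell,\langle\vec x\rangle[b_1,\dots,b_j,\xi_\top(a_{j+1})]_i)$, $(5)$ for $1\le j\le k$ and $v\in\mathrm{AP}(b_j)$ (fresh variables): $f_i^j(\vec\ell,\langle\vec x\rangle[b_1,\dots,b_{j-1},v]_i)\to f(\vec\ell,\langle\vec x\rangle[\bot]_i)$; and for any $k$: $(6)$ for $1\le j\le n$ and $v\in\mathrm{AP}(\ell_j)$ (fresh variables): $f(\langle\vec y\rangle[v]_j,\langle\vec x\rangle[\top]_i)\to f(\langle\vec y\rangle[v]_j,\langle\vec x\rangle[\bot]_i)$. Proper terms $\mathcal T_{\mathrm p}(\mathcal H,\mathcal V)$: a term of $\mathcal T(\mathcal H,\mathcal V)$ is proper if it is a variable, or $f(s_1,\dots,s_n)$ with $f$ a constructor and proper $s_i$, or $f(s_1,\dots,s_n,c_1,\dots,c_{m_f})$ with $f$ defined, proper $s_i$ and $c_1,\dots,c_{m_f}\in\{\bot,\top\}$; $\mathcal T_{\mathrm p}(\mathcal H)$ denotes the ground proper terms. *)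

theory Defs
  imports Main
begin

datatype ('f, 'v) trm = Var 'v | Fun 'f "('f, 'v) trm list"

primrec vars :: "('f, 'v) trm \<Rightarrow> 'v set" where
  "vars (Var x) = {x}"
| "vars (Fun f ts) = \<Union> (set (map vars ts))"

primrec funs :: "('f, 'v) trm \<Rightarrow> 'f set" where
  "funs (Var x) = {}"
| "funs (Fun f ts) = insert f (\<Union> (set (map funs ts)))"

primrec vars_list :: "('f, 'v) trm \<Rightarrow> 'v list" where
  "vars_list (Var x) = [x]"
| "vars_list (Fun f ts) = concat (map vars_list ts)"

definition linear :: "('f, 'v) trm \<Rightarrow> bool" where
  "linear t \<longleftrightarrow> distinct (vars_list t)"

primrec subst :: "('v \<Rightarrow> ('f, 'w) trm) \<Rightarrow> ('f, 'v) trm \<Rightarrow> ('f, 'w) trm" where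
  "subst \<sigma> (Var x) = \<sigma> x"
| "subst \<sigma> (Fun f ts) = Fun f (map (subst \<sigma>) ts)"

fun wf_term :: "'f set \<Rightarrow> ('f \<Rightarrow> nat) \<Rightarrow> ('f, 'v) trm \<Rightarrow> bool" where
  "wf_term F ar (Var x) = True"
| "wf_term F ar (Fun f ts) = (f \<in> F \<and> length ts = ar f \<and> (\<forall>t \<in> set ts. wf_term F ar t))"

text \<open>A conditional rule \<open>l \<rightarrow> r \<Leftarrow> a1 \<approx> b1, ..., ak \<approx> bk\<close> is the triple
  \<open>(l, r, [(a1,b1),...,(ak,bk)])\<close>.\<close>
type_synonym ('f, 'v) crule = "('f, 'v) trm \<times> ('f, 'v) trm \<times> (('f, 'v) trm \<times> ('f, 'v) trm) list"

definition rlhs :: "('f, 'v) crule \<Rightarrow> ('f, 'v) trm" where "rlhs \<rho> = fst \<rho>"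
definition rrhs :: "('f, 'v) crule \<Rightarrow> ('f, 'v) trm" where "rrhs \<rho> = fst (snd \<rho>)"
definition rconds :: "('f, 'v) crule \<Rightarrow> (('f, 'v) trm \<times> ('f, 'v) trm) list" where
  "rconds \<rho> = snd (snd \<rho>)"

definition rules_of :: "('f, 'v) crule set \<Rightarrow> 'f \<Rightarrow> ('f, 'v) crule set" where
  "rules_of R f = {\<rho> \<in> R. \<exists>ls. rlhs \<rho> = Fun f ls}"

definition defined :: "('f, 'v) crule set \<Rightarrow> 'f \<Rightarrow> bool" where
  "defined R f \<longleftrightarrow> rules_of R f \<noteq> {}"

definition constructor_term :: "('f, 'v) crule set \<Rightarrow> ('f, 'v) trm \<Rightarrow> bool" where
  "constructor_term R t \<longleftrightarrow> (\<forall>g \<in> funs t. \<not> defined R g)"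

definition cctrs :: "'f set \<Rightarrow> ('f \<Rightarrow> nat) \<Rightarrow> ('f, 'v) crule set \<Rightarrow> bool" where
  "cctrs F ar R \<longleftrightarrow> (\<forall>\<rho> \<in> R. \<exists>f ls r cs. \<rho> = (Fun f ls, r, cs) \<and>
      wf_term F ar (Fun f ls) \<and> wf_term F ar r \<and>
      (\<forall>(a, b) \<in> set cs. wf_term F ar a \<and> wf_term F ar b) \<and>
      (\<forall>l \<in> set ls. constructor_term R l) \<and>
      (\<forall>(a, b) \<in> set cs. constructor_term R b) \<and>
      (let T = Fun f ls # map snd cs in
         \<forall>i < length T. \<forall>j < length T. i \<noteq> j \<longrightarrow> vars (T ! i) \<inter> vars (T ! j) = {}) \<and>
      vars r \<subseteq> vars (Fun f ls) \<union> \<Union> (set (map (vars \<circ> snd) cs)) \<and>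
      (\<forall>i < length cs. vars (fst (cs ! i)) \<subseteq>
          vars (Fun f ls) \<union> \<Union> (set (map (vars \<circ> snd) (take i cs)))))"

definition strong_cctrs :: "'f set \<Rightarrow> ('f \<Rightarrow> nat) \<Rightarrow> ('f, 'v) crule set \<Rightarrow> bool" where
  "strong_cctrs F ar R \<longleftrightarrow> cctrs F ar R \<and> (\<forall>f. finite (rules_of R f)) \<and>
     (\<forall>\<rho> \<in> R. linear (rlhs \<rho>) \<and> (\<forall>(a, b) \<in> set (rconds \<rho>). linear b))"

text \<open>\<open>Orig f\<close> is \<open>f \<in> F\<close> (with arity \<open>n + m_f\<close>), \<open>Cond f i j\<close> is \<open>f_i^j\<close>
  (indices \<open>i, j\<close> are 1-based as in the paper).\<close>
datatype 'f hsym = Bot | Top | Orig 'f | Cond 'f nat nat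

abbreviation hconst :: "'f hsym \<Rightarrow> ('f hsym, 'v) trm" where
  "hconst c \<equiv> Fun c []"

text \<open>Replacement-map \<open>\<mu>\<close> (argument positions 1-based).\<close>
fun mu :: "('f \<Rightarrow> nat) \<Rightarrow> 'f hsym \<Rightarrow> nat set" where
  "mu ar Bot = {}"
| "mu ar Top = {}"
| "mu ar (Orig f) = {1..ar f}"
| "mu ar (Cond f i j) = {ar f + i + j - 1}"

text \<open>\<open>\<xi>_\<star>\<close>; \<open>m f\<close> is the number of rules defining \<open>f\<close> (0 for constructors, for
  which \<open>\<xi>_\<star>\<close> is therefore homomorphic).\<close>
primrec xi :: "('f \<Rightarrow> nat) \<Rightarrow> 'f hsym \<Rightarrow> ('f, 'v) trm \<Rightarrow> ('f hsym, 'v) trm" where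
  "xi m c (Var x) = Var x"
| "xi m c (Fun f ts) = Fun (Orig f) (map (xi m c) ts @ replicate (m f) (hconst c))"

primrec emb :: "('f, 'v) trm \<Rightarrow> ('f hsym, 'v) trm" where
  "emb (Var x) = Var x"
| "emb (Fun f ts) = Fun (Orig f) (map emb ts)"

text \<open>\<open>\<langle>t_1..t_n\<rangle>[u_1..u_j]_i\<close> (1-based \<open>i\<close>).\<close>
definition repl_at :: "'a list \<Rightarrow> nat \<Rightarrow> 'a list \<Rightarrow> 'a list" where
  "repl_at ts i us = take (i - 1) ts @ us @ drop i ts"

text \<open>Anti-patterns \<open>AP(t)\<close> (with fresh distinct variables: each pattern is linear).\<close>
inductive AP :: "'f set \<Rightarrow> ('f \<Rightarrow> nat) \<Rightarrow> ('f, 'v) crule set \<Rightarrow> ('f \<Rightarrow> nat)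
    \<Rightarrow> ('f, 'v) trm \<Rightarrow> ('f hsym, 'v) trm \<Rightarrow> bool"
  for F ar R m where
  AP_con: "g \<in> F \<Longrightarrow> \<not> defined R g \<Longrightarrow> g \<noteq> f \<Longrightarrow> length xs = ar g \<Longrightarrow> distinct xs \<Longrightarrow>
     AP F ar R m (Fun f ts) (Fun (Orig g) (map Var xs))"
| AP_def: "g \<in> F \<Longrightarrow> defined R g \<Longrightarrow> length xs = ar g \<Longrightarrow> distinct xs \<Longrightarrow>
     AP F ar R m (Fun f ts) (Fun (Orig g) (map Var xs @ replicate (m g) (hconst Bot)))"
| AP_arg: "1 \<le> i \<Longrightarrow> i \<le> length ts \<Longrightarrow> AP F ar R m (ts ! (i - 1)) u \<Longrightarrow>
     length xs = length ts \<Longrightarrow> distinct xs \<Longrightarrow> set xs \<inter> vars u = {} \<Longrightarrow>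
     AP F ar R m (Fun f ts) (Fun (Orig f) (repl_at (map Var xs) i [u]))"

text \<open>\<open>enum f\<close> is the fixed enumeration \<open>\<rho>^f_1, ..., \<rho>^f_{m_f}\<close> of \<open>R\<restriction>f\<close>;
  \<open>m_f = length (enum f)\<close>.\<close>
definition mf :: "('f \<Rightarrow> ('f, 'v) crule list) \<Rightarrow> 'f \<Rightarrow> nat" where
  "mf enum f = length (enum f)"

definition rule_vars :: "('f, 'v) crule \<Rightarrow> 'v set" where
  "rule_vars \<rho> = vars (rlhs \<rho>) \<union> vars (rrhs \<rho>) \<union>
     \<Union> (set (map (\<lambda>(a, b). vars a \<union> vars b) (rconds \<rho>)))"

inductive_set Xi :: "'f set \<Rightarrow> ('f \<Rightarrow> nat) \<Rightarrow> ('f, 'v) crule set \<Rightarrow> ('f \<Rightarrow> ('f, 'v) crule list)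
    \<Rightarrow> (('f hsym, 'v) trm \<times> ('f hsym, 'v) trm) set"
  for F ar R enum where
  Xi1: "\<lbrakk>1 \<le> i; i \<le> mf enum f; enum f ! (i - 1) = (Fun f ls, r, []);
         length xs = mf enum f; distinct xs; set xs \<inter> rule_vars (enum f ! (i - 1)) = {}\<rbrakk> \<Longrightarrow>
     (Fun (Orig f) (map emb ls @ repl_at (map Var xs) i [hconst Top]), xi (mf enum) Top r)
       \<in> Xi F ar R enum"
| Xi2: "\<lbrakk>1 \<le> i; i \<le> mf enum f; enum f ! (i - 1) = (Fun f ls, r, cs); cs \<noteq> [];
         length xs = mf enum f; distinct xs; set xs \<inter> rule_vars (enum f ! (i - 1)) = {}\<rbrakk> \<Longrightarrow>
     (Fun (Orig f) (map emb ls @ repl_at (map Var xs) i [hconst Top]),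
      Fun (Cond f i 1) (map emb ls @ repl_at (map Var xs) i [xi (mf enum) Top (fst (cs ! 0))]))
       \<in> Xi F ar R enum"
| Xi3: "\<lbrakk>1 \<le> i; i \<le> mf enum f; enum f ! (i - 1) = (Fun f ls, r, cs); cs \<noteq> [];
         length xs = mf enum f; distinct xs; set xs \<inter> rule_vars (enum f ! (i - 1)) = {}\<rbrakk> \<Longrightarrow>
     (Fun (Cond f i (length cs)) (map emb ls @ repl_at (map Var xs) i (map (emb \<circ> snd) cs)),
      xi (mf enum) Top r)
       \<in> Xi F ar R enum"
| Xi4: "\<lbrakk>1 \<le> i; i \<le> mf enum f; enum f ! (i - 1) = (Fun f ls, r, cs); 1 \<le> j; j < length cs;
         length xs = mf enum f; distinct xs; set xs \<inter> rule_vars (enum f ! (i - 1)) = {}\<rbrakk> \<Longrightarrow>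
     (Fun (Cond f i j) (map emb ls @ repl_at (map Var xs) i (map (emb \<circ> snd) (take j cs))),
      Fun (Cond f i (Suc j)) (map emb ls @ repl_at (map Var xs) i
          (map (emb \<circ> snd) (take j cs) @ [xi (mf enum) Top (fst (cs ! j))])))
       \<in> Xi F ar R enum"
| Xi5: "\<lbrakk>1 \<le> i; i \<le> mf enum f; enum f ! (i - 1) = (Fun f ls, r, cs); 1 \<le> j; j \<le> length cs;
         AP F ar R (mf enum) (snd (cs ! (j - 1))) v;
         length xs = mf enum f; distinct xs; set xs \<inter> rule_vars (enum f ! (i - 1)) = {};
         vars v \<inter> (set xs \<union> rule_vars (enum f ! (i - 1))) = {}\<rbrakk> \<Longrightarrow>
     (Fun (Cond f i j) (map emb ls @ repl_at (map Var xs) i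
          (map (emb \<circ> snd) (take (j - 1) cs) @ [v])),
      Fun (Orig f) (map emb ls @ repl_at (map Var xs) i [hconst Bot]))
       \<in> Xi F ar R enum"
| Xi6: "\<lbrakk>1 \<le> i; i \<le> mf enum f; enum f ! (i - 1) = (Fun f ls, r, cs); 1 \<le> j; j \<le> length ls;
         AP F ar R (mf enum) (ls ! (j - 1)) v;
         length xs = mf enum f; length ys = length ls; distinct (xs @ ys);
         vars v \<inter> (set xs \<union> set ys) = {}\<rbrakk> \<Longrightarrow>
     (Fun (Orig f) (repl_at (map Var ys) j [v] @ repl_at (map Var xs) i [hconst Top]),
      Fun (Orig f) (repl_at (map Var ys) j [v] @ repl_at (map Var xs) i [hconst Bot]))
       \<in> Xi F ar R enum"

inductive cs_step :: "'f set \<Rightarrow> ('f \<Rightarrow> nat) \<Rightarrow> ('f, 'v) crule set \<Rightarrow> ('f \<Rightarrow> ('f, 'v) crule list)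
    \<Rightarrow> ('f hsym, 'v) trm \<Rightarrow> ('f hsym, 'v) trm \<Rightarrow> bool"
  for F ar R enum where
  cs_root: "(l, r) \<in> Xi F ar R enum \<Longrightarrow> cs_step F ar R enum (subst \<sigma> l) (subst \<sigma> r)"
| cs_arg: "i \<in> mu ar g \<Longrightarrow> 1 \<le> i \<Longrightarrow> i \<le> length ts \<Longrightarrow> cs_step F ar R enum (ts ! (i - 1)) u \<Longrightarrow>
     cs_step F ar R enum (Fun g ts) (Fun g (ts[i - 1 := u]))"

inductive proper :: "'f set \<Rightarrow> ('f \<Rightarrow> nat) \<Rightarrow> ('f, 'v) crule set \<Rightarrow> ('f \<Rightarrow> ('f, 'v) crule list)
    \<Rightarrow> ('f hsym, 'v) trm \<Rightarrow> bool"
  for F ar R enum where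
  proper_var: "proper F ar R enum (Var x)"
| proper_con: "f \<in> F \<Longrightarrow> \<not> defined R f \<Longrightarrow> length ss = ar f \<Longrightarrow>
     (\<forall>s' \<in> set ss. proper F ar R enum s') \<Longrightarrow> proper F ar R enum (Fun (Orig f) ss)"
| proper_def: "f \<in> F \<Longrightarrow> defined R f \<Longrightarrow> length ss = ar f \<Longrightarrow>
     (\<forall>s' \<in> set ss. proper F ar R enum s') \<Longrightarrow> length cs = mf enum f \<Longrightarrow>
     set cs \<subseteq> {hconst Bot, hconst Top} \<Longrightarrow> proper F ar R enum (Fun (Orig f) (ss @ cs))"

definition proper_ground :: "'f set \<Rightarrow> ('f \<Rightarrow> nat) \<Rightarrow> ('f, 'v) crule set
    \<Rightarrow> ('f \<Rightarrow> ('f, 'v) crule list) \<Rightarrow> ('f hsym, 'v) trm \<Rightarrow> bool" where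
  "proper_ground F ar R enum s \<longleftrightarrow> proper F ar R enum s \<and> vars s = {}"

definition bot_pattern :: "'f set \<Rightarrow> ('f \<Rightarrow> nat) \<Rightarrow> ('f \<Rightarrow> ('f, 'v) crule list)
    \<Rightarrow> ('f hsym, 'v) trm \<Rightarrow> bool" where
  "bot_pattern F ar enum u \<longleftrightarrow> linear u \<and> (\<exists>t. wf_term F ar t \<and> u = xi (mf enum) Bot t)"

end

theory Submission
  imports Defs
begin

text \<open>Ground proper terms belong to a larger class of well-shaped terms, which also contains
  the intermediate terms \<open>f_i^j(\<dots>)\<close> produced while the conditions of a rule are evaluated,
  and this class is closed under \<open>\<rightarrow>_{\<Xi>(R),\<mu>}\<close>. In a well-shaped normal form every active
  argument is itself a normal form, hence inductively the \<open>\<bottom>\<close>-image of a ground term. Against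
  such arguments a linear constructor pattern either matches or is matched by one of its
  anti-patterns, so a \<open>\<top>\<close> flag would still allow a step by rule (1), (2) or (6), and a
  conditional symbol one by rule (3), (4) or (5). What remains are constructors and defined
  symbols all of whose flags are \<open>\<bottom>\<close>, i.e. a \<open>\<bottom>\<close>-pattern.\<close>

lemma finite_vars [simp]: "finite (vars t)"
  by (induction t) auto

lemma set_vars_list [simp]: "set (vars_list t) = vars t"
  by (induction t) auto

lemma ground_linear: "vars t = {} \<Longrightarrow> linear t"
  by (simp add: linear_def flip: set_vars_list)

lemma linear_arg: "linear (Fun f ts) \<Longrightarrow> t \<in> set ts \<Longrightarrow> linear t"
  by (auto simp: linear_def distinct_concat_iff)

lemma subst_cong_vars: "(\<And>x. x \<in> vars t \<Longrightarrow> \<sigma> x = \<tau> x) \<Longrightarrow> subst \<sigma> t = subst \<tau> t"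
  by (induction t) auto

lemma vars_emb [simp]: "vars (emb t) = vars t"
  by (induction t) auto

lemma vars_list_emb [simp]: "vars_list (emb t) = vars_list t"
  by (induction t) (auto cong: map_cong)

lemma vars_xi [simp]: "vars (xi m c t) = vars t"
  by (induction t) auto

lemma subst_Var_comp [simp]: "subst \<sigma> \<circ> Var = \<sigma>"
  by (rule ext) simp

lemma map_repl_at [simp]: "map f (repl_at L i X) = repl_at (map f L) i (map f X)"
  by (simp add: repl_at_def take_map drop_map)

lemma length_repl_at [simp]:
  "1 \<le> i \<Longrightarrow> i \<le> length L \<Longrightarrow> length (repl_at L i X) = length L - 1 + length X"
  by (simp add: repl_at_def)

lemma repl_at_repl_at:
  "1 \<le> i \<Longrightarrow> i \<le> length L \<Longrightarrow> length Y = 1 \<Longrightarrow> repl_at (repl_at L i Y) i X = repl_at L i X"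
  by (simp add: repl_at_def)

lemma repl_at_nth_self: "1 \<le> i \<Longrightarrow> i \<le> length L \<Longrightarrow> repl_at L i [L ! (i - 1)] = L"
  unfolding repl_at_def using id_take_nth_drop[of "i - 1" L] by simp

lemma repl_at_eqD:
  assumes "repl_at L i B = repl_at L' i B'" "length L = length L'" "1 \<le> i" "i \<le> length L"
    "length B = length B'"
  shows "B = B'" "repl_at L i X = repl_at L' i X"
  using assms by (simp_all add: repl_at_def append_eq_append_conv)

lemma set_repl_at_subset: "set (repl_at L i X) \<subseteq> set L \<union> set X"
  unfolding repl_at_def using set_take_subset set_drop_subset by fastforce

lemma map_take_Suc_last:
  "1 \<le> j \<Longrightarrow> j \<le> length cs \<Longrightarrow> map g (take j cs) = map g (take (j - 1) cs) @ [g (cs ! (j - 1))]"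
  using take_Suc_conv_app_nth[of "j - 1" cs] by simp

lemma set_take_Suc_last:
  "1 \<le> j \<Longrightarrow> j \<le> length cs \<Longrightarrow> set (take j cs) = insert (cs ! (j - 1)) (set (take (j - 1) cs))"
  using take_Suc_conv_app_nth[of "j - 1" cs] by (cases j) auto

definition upds :: "('v \<Rightarrow> 'a) \<Rightarrow> 'v list \<Rightarrow> 'a list \<Rightarrow> 'v \<Rightarrow> 'a" where
  "upds \<sigma> xs vs x = (case map_of (zip xs vs) x of None \<Rightarrow> \<sigma> x | Some v \<Rightarrow> v)"

lemma upds_notin: "x \<notin> set xs \<Longrightarrow> upds \<sigma> xs vs x = \<sigma> x"
  unfolding upds_def by (auto dest: set_zip_leftD split: option.split dest!: map_of_SomeD)

lemma map_upds_self: "distinct xs \<Longrightarrow> length xs = length vs \<Longrightarrow> map (upds \<sigma> xs vs) xs = vs"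
  by (auto simp: upds_def map_of_zip_nth intro!: nth_equalityI)

lemma subst_upds_disjoint: "vars t \<inter> set xs = {} \<Longrightarrow> subst (upds \<sigma> xs vs) t = subst \<sigma> t"
  by (rule subst_cong_vars) (metis disjoint_iff upds_notin)

lemma exists_fresh_vars:
  assumes "infinite (UNIV :: 'v set)" "finite V"
  shows "\<exists>xs :: 'v list. length xs = n \<and> distinct xs \<and> set xs \<inter> V = {}"
proof (induction n)
  case 0
  show ?case by simp
next
  case (Suc n)
  then obtain xs where xs: "length xs = n" "distinct xs" "set xs \<inter> V = {}" by blast
  obtain x where "x \<notin> V \<union> set xs" using assms ex_new_if_finite[of "V \<union> set xs"] by auto
  then show ?case using xs by (intro exI[of _ "x # xs"]) auto
qed

lemma match_linear_list:
  "distinct (concat (map vars_list ps)) \<Longrightarrow> length ws = length ps \<Longrightarrow>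
   (\<forall>k < length ps. \<exists>\<sigma>. subst \<sigma> (ps ! k) = ws ! k) \<Longrightarrow> \<exists>\<sigma>. map (subst \<sigma>) ps = ws"
proof (induction ps arbitrary: ws)
  case Nil
  then show ?case by simp
next
  case (Cons p ps)
  obtain w ws' where ws: "ws = w # ws'" using Cons.prems(2) by (cases ws) auto
  from Cons.prems(3) obtain \<sigma>1 where \<sigma>1: "subst \<sigma>1 p = w" using ws by force
  have "\<exists>\<sigma>. map (subst \<sigma>) ps = ws'"
    using Cons.prems ws by (intro Cons.IH) (auto, metis Suc_less_eq length_Cons nth_Cons_Suc)
  then obtain \<sigma>2 where \<sigma>2: "map (subst \<sigma>2) ps = ws'" by blast
  have disj: "vars p \<inter> vars q = {}" if "q \<in> set ps" for q
    using Cons.prems(1) that by (auto simp flip: set_vars_list)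
  define \<sigma> where "\<sigma> x = (if x \<in> vars p then \<sigma>1 x else \<sigma>2 x)" for x
  have "subst \<sigma> p = w" using \<sigma>1 by (metis \<sigma>_def subst_cong_vars)
  moreover have "map (subst \<sigma>) ps = ws'"
    unfolding \<sigma>2[symmetric] using disj by (force intro!: subst_cong_vars simp: \<sigma>_def)
  ultimately show ?case using ws by (intro exI[of _ \<sigma>]) simp
qed

lemma finite_rule_vars: "finite (rule_vars \<rho>)"
  unfolding rule_vars_def by (auto split: prod.split)

lemma rule_vars_lhs: "vars (Fun f ls) \<subseteq> rule_vars (Fun f ls, r, conds)"
  unfolding rule_vars_def rlhs_def by auto

lemma rule_vars_cond: "c \<in> set conds \<Longrightarrow> vars (snd c) \<subseteq> rule_vars (Fun f ls, r, conds)"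
  unfolding rule_vars_def rconds_def by (cases c) force

lemma rule_vars_prefix:
  "vars (Fun f ls) \<union> \<Union> (set (map (vars \<circ> snd) (take k conds))) \<subseteq> rule_vars (Fun f ls, r, conds)"
proof -
  have "vars (snd c) \<subseteq> rule_vars (Fun f ls, r, conds)" if "c \<in> set (take k conds)" for c
    using rule_vars_cond[OF in_set_takeD[OF that]] .
  then show ?thesis using rule_vars_lhs[of f ls r conds] by auto
qed

lemma constructor_term_Fun:
  "constructor_term R (Fun g ts) \<longleftrightarrow> \<not> defined R g \<and> (\<forall>t \<in> set ts. constructor_term R t)"
  unfolding constructor_term_def by auto

text \<open>In \<open>ws_cond\<close> the left-hand side and the first \<open>j - 1\<close> condition right-hand sides of
  \<open>\<rho>^f_i\<close> have been matched by \<open>\<sigma>\<close>, and \<open>u\<close> is the \<open>j\<close>-th condition being evaluated.\<close>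
inductive well_shaped :: "'f set \<Rightarrow> ('f \<Rightarrow> nat) \<Rightarrow> ('f, 'v) crule set \<Rightarrow> ('f \<Rightarrow> ('f, 'v) crule list)
    \<Rightarrow> ('f hsym, 'v) trm \<Rightarrow> bool"
  for F ar R enum where
  ws_con: "f \<in> F \<Longrightarrow> \<not> defined R f \<Longrightarrow> length ss = ar f \<Longrightarrow>
    (\<forall>s \<in> set ss. well_shaped F ar R enum s) \<Longrightarrow> well_shaped F ar R enum (Fun (Orig f) ss)"
| ws_def: "f \<in> F \<Longrightarrow> defined R f \<Longrightarrow> length ss = ar f \<Longrightarrow>
    (\<forall>s \<in> set ss. well_shaped F ar R enum s) \<Longrightarrow> length cs = mf enum f \<Longrightarrow>
    set cs \<subseteq> {hconst Bot, hconst Top} \<Longrightarrow> well_shaped F ar R enum (Fun (Orig f) (ss @ cs))"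
| ws_cond: "1 \<le> i \<Longrightarrow> i \<le> mf enum f \<Longrightarrow> enum f ! (i - 1) = (Fun f ls, r, conds) \<Longrightarrow>
    length ls = ar f \<Longrightarrow> 1 \<le> j \<Longrightarrow> j \<le> length conds \<Longrightarrow>
    length cs = mf enum f \<Longrightarrow> set cs \<subseteq> {hconst Bot, hconst Top} \<Longrightarrow>
    (\<forall>x \<in> vars (Fun f ls) \<union> \<Union> (set (map (vars \<circ> snd) (take (j - 1) conds))).
       well_shaped F ar R enum (\<sigma> x)) \<Longrightarrow>
    well_shaped F ar R enum u \<Longrightarrow>
    well_shaped F ar R enum (Fun (Cond f i j) (map (subst \<sigma> \<circ> emb) ls @
      repl_at cs i (map (subst \<sigma> \<circ> emb \<circ> snd) (take (j - 1) conds) @ [u])))"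

locale strong_unraveling =
  fixes F :: "'f set" and ar :: "'f \<Rightarrow> nat" and R :: "('f, 'v) crule set"
    and enum :: "'f \<Rightarrow> ('f, 'v) crule list"
  assumes infinite_vars: "infinite (UNIV :: 'v set)"
    and strong: "strong_cctrs F ar R"
    and enum: "\<forall>f. distinct (enum f) \<and> set (enum f) = rules_of R f"
begin

abbreviation "ws \<equiv> well_shaped F ar R enum"
abbreviation "m \<equiv> mf enum"
abbreviation "step \<equiv> cs_step F ar R enum"

lemma mf_constructor: "\<not> defined R g \<Longrightarrow> m g = 0"
  using enum unfolding defined_def mf_def by (metis list.size(3) set_empty)

lemma enum_in_rules_of: "1 \<le> i \<Longrightarrow> i \<le> m f \<Longrightarrow> enum f ! (i - 1) \<in> rules_of R f"
  using enum nth_mem[of "i - 1" "enum f"] unfolding mf_def by auto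

lemma defined_if_enum: "1 \<le> i \<Longrightarrow> i \<le> m f \<Longrightarrow> defined R f"
  using enum_in_rules_of unfolding defined_def by blast

lemma enum_shape:
  assumes "1 \<le> i" "i \<le> m f"
  obtains ls r conds where "enum f ! (i - 1) = (Fun f ls, r, conds)"
proof -
  obtain ls where "rlhs (enum f ! (i - 1)) = Fun f ls"
    using enum_in_rules_of[OF assms] unfolding rules_of_def by blast
  then show ?thesis using that unfolding rlhs_def by (metis prod.collapse)
qed

lemma enum_props:
  assumes "1 \<le> i" "i \<le> m f" "enum f ! (i - 1) = (Fun f ls, r, conds)"
  shows "f \<in> F" "length ls = ar f" "\<forall>l \<in> set ls. wf_term F ar l \<and> constructor_term R l"
    "wf_term F ar r"
    "\<forall>(a, b) \<in> set conds. wf_term F ar a \<and> wf_term F ar b \<and> constructor_term R b \<and> linear b"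
    "linear (Fun f ls)"
    "\<forall>k < length conds. vars (Fun f ls) \<inter> vars (snd (conds ! k)) = {}"
    "\<forall>k < length conds. \<forall>k' < length conds. k \<noteq> k' \<longrightarrow>
       vars (snd (conds ! k)) \<inter> vars (snd (conds ! k')) = {}"
    "vars r \<subseteq> vars (Fun f ls) \<union> \<Union> (set (map (vars \<circ> snd) conds))"
    "\<forall>k < length conds. vars (fst (conds ! k)) \<subseteq>
       vars (Fun f ls) \<union> \<Union> (set (map (vars \<circ> snd) (take k conds)))"
proof -
  have \<rho>: "(Fun f ls, r, conds) \<in> R"
    using enum_in_rules_of[OF assms(1,2)] assms(3) by (simp add: rules_of_def)
  from strong have C: "cctrs F ar R"
    and lin: "\<forall>\<rho> \<in> R. linear (rlhs \<rho>) \<and> (\<forall>(a, b) \<in> set (rconds \<rho>). linear b)"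
    by (auto simp: strong_cctrs_def)
  note B = bspec[OF C[unfolded cctrs_def] \<rho>]
  note Lin = bspec[OF lin \<rho>]
  show "f \<in> F" "length ls = ar f" "\<forall>l \<in> set ls. wf_term F ar l \<and> constructor_term R l"
    "wf_term F ar r" "vars r \<subseteq> vars (Fun f ls) \<union> \<Union> (set (map (vars \<circ> snd) conds))"
    "\<forall>k < length conds. vars (fst (conds ! k)) \<subseteq>
       vars (Fun f ls) \<union> \<Union> (set (map (vars \<circ> snd) (take k conds)))"
    using B by auto
  show "\<forall>(a, b) \<in> set conds. wf_term F ar a \<and> wf_term F ar b \<and> constructor_term R b \<and> linear b"
    using B Lin by (auto simp: rconds_def)
  show "linear (Fun f ls)" using Lin by (simp add: rlhs_def)
  define T where "T = Fun f ls # map snd conds"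
  have PW: "\<forall>a < length T. \<forall>b < length T. a \<noteq> b \<longrightarrow> vars (T ! a) \<inter> vars (T ! b) = {}"
    using B by (simp add: T_def Let_def)
  show "\<forall>k < length conds. vars (Fun f ls) \<inter> vars (snd (conds ! k)) = {}"
    using PW[rule_format, of 0 "Suc _"] by (simp add: T_def)
  show "\<forall>k < length conds. \<forall>k' < length conds. k \<noteq> k' \<longrightarrow>
      vars (snd (conds ! k)) \<inter> vars (snd (conds ! k')) = {}"
    using PW[rule_format, of "Suc _" "Suc _"] by (simp add: T_def)
qed

lemma emb_eq_xi: "constructor_term R l \<Longrightarrow> emb l = xi m c l"
  by (induction l) (auto simp: constructor_term_Fun mf_constructor)

lemma ws_subst_xi:
  "wf_term F ar r \<Longrightarrow> \<forall>x \<in> vars r. ws (\<sigma> x) \<Longrightarrow> c \<in> {Bot, Top} \<Longrightarrow> ws (subst \<sigma> (xi m c r))"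
proof (induction r)
  case (Var x)
  then show ?case by simp
next
  case (Fun g ts)
  have args: "\<forall>s \<in> set (map (subst \<sigma> \<circ> xi m c) ts). ws s" using Fun by auto
  show ?case
  proof (cases "defined R g")
    case True
    have "ws (Fun (Orig g) (map (subst \<sigma> \<circ> xi m c) ts @ replicate (m g) (hconst c)))"
      by (rule ws_def) (use Fun True args in auto)
    then show ?thesis by simp
  next
    case False
    have "ws (Fun (Orig g) (map (subst \<sigma> \<circ> xi m c) ts))"
      by (rule ws_con) (use Fun False args in auto)
    then show ?thesis using False by (simp add: mf_constructor)
  qed
qed

lemma ws_subst_emb:
  "constructor_term R l \<Longrightarrow> wf_term F ar l \<Longrightarrow> \<forall>x \<in> vars l. ws (\<sigma> x) \<Longrightarrow> ws (subst \<sigma> (emb l))"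
  using ws_subst_xi[of l \<sigma> Bot] emb_eq_xi[of l Bot] by simp

lemma ws_subst_emb_vars:
  "constructor_term R l \<Longrightarrow> ws (subst \<sigma> (emb l)) \<Longrightarrow> \<forall>x \<in> vars l. ws (\<sigma> x)"
proof (induction l)
  case (Var x)
  then show ?case by simp
next
  case (Fun g ts)
  have nd: "\<not> defined R g" and ct: "\<forall>t \<in> set ts. constructor_term R t"
    using Fun.prems(1) by (auto simp: constructor_term_Fun)
  from Fun.prems(2) have "\<forall>s \<in> set (map (subst \<sigma> \<circ> emb) ts). ws s"
    by (cases rule: well_shaped.cases) (use nd in auto)
  then show ?case using Fun.IH ct by auto
qed

lemma ws_proper_ground: "proper F ar R enum s \<Longrightarrow> vars s = {} \<Longrightarrow> ws s"
  by (induction rule: proper.induct) (auto intro: ws_con ws_def)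

lemma ws_Orig_definedD:
  assumes "ws (Fun (Orig f) (A @ B))" "defined R f" "length A = ar f"
  shows "\<forall>s \<in> set A. ws s" "set B \<subseteq> {hconst Bot, hconst Top}" "length B = m f"
proof -
  obtain ss cs where E: "A @ B = ss @ cs" "length ss = ar f" "\<forall>s \<in> set ss. ws s"
    "length cs = m f" "set cs \<subseteq> {hconst Bot, hconst Top}"
    using assms(1) by (cases rule: well_shaped.cases) (use assms(2) in auto)
  then have "ss = A" "cs = B" using assms(3) by (simp_all add: append_eq_append_conv)
  then show "\<forall>s \<in> set A. ws s" "set B \<subseteq> {hconst Bot, hconst Top}" "length B = m f"
    using E by auto
qed

lemma ws_CondD:
  assumes "1 \<le> i" "i \<le> m f" "enum f ! (i - 1) = (Fun f ls, r, conds)" "length xs = m f"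
    "1 \<le> j" "j \<le> length conds"
    "ws (Fun (Cond f i j) (map (subst \<sigma> \<circ> emb) ls @
       repl_at (map \<sigma> xs) i (map (subst \<sigma> \<circ> emb \<circ> snd) (take (j - 1) conds) @ [w])))"
  shows "\<forall>x \<in> vars (Fun f ls) \<union> \<Union> (set (map (vars \<circ> snd) (take (j - 1) conds))). ws (\<sigma> x)"
    "ws w" "set (repl_at (map \<sigma> xs) i [hconst Bot]) \<subseteq> {hconst Bot, hconst Top}"
proof -
  note P = enum_props[OF assms(1-3)]
  let ?D = "vars (Fun f ls) \<union> \<Union> (set (map (vars \<circ> snd) (take (j - 1) conds)))"
  obtain \<sigma>' u cs where eq: "map (subst \<sigma> \<circ> emb) ls @
       repl_at (map \<sigma> xs) i (map (subst \<sigma> \<circ> emb \<circ> snd) (take (j - 1) conds) @ [w]) =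
     map (subst \<sigma>' \<circ> emb) ls @
       repl_at cs i (map (subst \<sigma>' \<circ> emb \<circ> snd) (take (j - 1) conds) @ [u])"
    and cs: "length cs = m f" "set cs \<subseteq> {hconst Bot, hconst Top}"
    and ws\<sigma>': "\<forall>x \<in> ?D. ws (\<sigma>' x)" and "ws u"
    using assms(7) by (cases rule: well_shaped.cases) (use assms(3) in auto)
  then have ls_eq: "map (subst \<sigma> \<circ> emb) ls = map (subst \<sigma>' \<circ> emb) ls"
    and flags_eq: "repl_at (map \<sigma> xs) i (map (subst \<sigma> \<circ> emb \<circ> snd) (take (j - 1) conds) @ [w]) =
       repl_at cs i (map (subst \<sigma>' \<circ> emb \<circ> snd) (take (j - 1) conds) @ [u])"
    by (simp_all add: append_eq_append_conv)
  have conds_eq: "map (subst \<sigma> \<circ> emb \<circ> snd) (take (j - 1) conds) =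
      map (subst \<sigma>' \<circ> emb \<circ> snd) (take (j - 1) conds)" and "w = u"
    using repl_at_eqD(1)[OF flags_eq] assms cs by auto
  then show "ws w" using \<open>ws u\<close> by simp
  have "repl_at (map \<sigma> xs) i [hconst Bot] = repl_at cs i [hconst Bot]"
    using repl_at_eqD(2)[OF flags_eq] assms cs by auto
  then show "set (repl_at (map \<sigma> xs) i [hconst Bot]) \<subseteq> {hconst Bot, hconst Top}"
    using set_repl_at_subset[of cs i "[hconst Bot]"] cs by auto
  have transfer: "\<forall>x \<in> vars p. ws (\<sigma> x)"
    if "constructor_term R p" "wf_term F ar p" "vars p \<subseteq> ?D"
       "subst \<sigma> (emb p) = subst \<sigma>' (emb p)" for p
    using that ws\<sigma>' ws_subst_emb[of p \<sigma>'] ws_subst_emb_vars[of p \<sigma>] by auto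
  show "\<forall>x \<in> ?D. ws (\<sigma> x)"
  proof
    fix x assume "x \<in> ?D"
    then consider l where "l \<in> set ls" "x \<in> vars l"
      | c where "c \<in> set (take (j - 1) conds)" "x \<in> vars (snd c)" by auto
    then show "ws (\<sigma> x)"
    proof cases
      case 1
      then show ?thesis using transfer[of l] ls_eq P(3) by (fastforce simp: map_eq_conv)
    next
      case 2
      moreover have "c \<in> set conds" using 2 in_set_takeD by fast
      ultimately show ?thesis using transfer[of "snd c"] conds_eq P(5)
        by (fastforce simp: map_eq_conv)
    qed
  qed
qed

lemma flags_repl_at:
  "set B \<subseteq> {hconst Bot, hconst Top} \<Longrightarrow> c \<in> {Bot, Top} \<Longrightarrow>
   set (repl_at B i [hconst c]) \<subseteq> {hconst Bot, hconst Top}"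
  using set_repl_at_subset[of B i "[hconst c]"] by auto

lemma ws_Cond_satisfiedD:
  assumes "1 \<le> i" "i \<le> m f" "enum f ! (i - 1) = (Fun f ls, r, conds)" "length xs = m f"
    "1 \<le> j" "j \<le> length conds"
    "ws (subst \<sigma> (Fun (Cond f i j) (map emb ls @ repl_at (map Var xs) i (map (emb \<circ> snd) (take j conds)))))"
  shows "\<forall>x \<in> vars (Fun f ls) \<union> \<Union> (set (map (vars \<circ> snd) (take j conds))). ws (\<sigma> x)"
    "set (repl_at (map \<sigma> xs) i [hconst Bot]) \<subseteq> {hconst Bot, hconst Top}"
proof -
  let ?b = "snd (conds ! (j - 1))"
  have "ws (Fun (Cond f i j) (map (subst \<sigma> \<circ> emb) ls @ repl_at (map \<sigma> xs) i
      (map (subst \<sigma> \<circ> emb \<circ> snd) (take (j - 1) conds) @ [subst \<sigma> (emb ?b)])))"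
    using assms(7) map_take_Suc_last[OF assms(5,6), of "subst \<sigma> \<circ> emb \<circ> snd"]
    by (simp add: comp_assoc)
  note C = ws_CondD[OF assms(1-6) this]
  have "constructor_term R ?b" using enum_props(5)[OF assms(1-3)] assms(5,6) nth_mem[of "j - 1" conds]
    by fastforce
  then have "\<forall>x \<in> vars ?b. ws (\<sigma> x)" using ws_subst_emb_vars C(2) by blast
  then show "\<forall>x \<in> vars (Fun f ls) \<union> \<Union> (set (map (vars \<circ> snd) (take j conds))). ws (\<sigma> x)"
    using C(1) set_take_Suc_last[OF assms(5,6)] by auto
  show "set (repl_at (map \<sigma> xs) i [hconst Bot]) \<subseteq> {hconst Bot, hconst Top}" by (fact C(3))
qed

lemma ws_Xi1_step:
  assumes "1 \<le> i" "i \<le> m f" "enum f ! (i - 1) = (Fun f ls, r, [])" "length xs = m f"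
    "ws (subst \<sigma> (Fun (Orig f) (map emb ls @ repl_at (map Var xs) i [hconst Top])))"
  shows "ws (subst \<sigma> (xi m Top r))"
proof -
  note P = enum_props[OF assms(1-3)]
  have "ws (Fun (Orig f) (map (subst \<sigma> \<circ> emb) ls @ repl_at (map \<sigma> xs) i [hconst Top]))"
    using assms(5) by simp
  then have "\<forall>l \<in> set ls. ws (subst \<sigma> (emb l))"
    using ws_Orig_definedD(1) defined_if_enum[OF assms(1,2)] P(2) by fastforce
  then have "\<forall>x \<in> vars (Fun f ls). ws (\<sigma> x)" using ws_subst_emb_vars P(3) by fastforce
  then show ?thesis using P(4,9) by (intro ws_subst_xi) auto
qed

lemma ws_Xi2_step:
  assumes "1 \<le> i" "i \<le> m f" "enum f ! (i - 1) = (Fun f ls, r, conds)" "conds \<noteq> []"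
    "length xs = m f"
    "ws (subst \<sigma> (Fun (Orig f) (map emb ls @ repl_at (map Var xs) i [hconst Top])))"
  shows "ws (subst \<sigma> (Fun (Cond f i 1)
    (map emb ls @ repl_at (map Var xs) i [xi m Top (fst (conds ! 0))])))"
proof -
  note P = enum_props[OF assms(1-3)]
  have "ws (Fun (Orig f) (map (subst \<sigma> \<circ> emb) ls @ repl_at (map \<sigma> xs) i [hconst Top]))"
    using assms(6) by simp
  note O = ws_Orig_definedD[OF this defined_if_enum[OF assms(1,2)]]
  have ls: "\<forall>x \<in> vars (Fun f ls). ws (\<sigma> x)"
    using O(1) P(2,3) ws_subst_emb_vars by fastforce
  have "wf_term F ar (fst (conds ! 0))" using P(5) assms(4) by (cases conds) auto
  moreover have "vars (fst (conds ! 0)) \<subseteq> vars (Fun f ls)" using P(10) assms(4) by force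
  ultimately have a1: "ws (subst \<sigma> (xi m Top (fst (conds ! 0))))"
    using ls by (intro ws_subst_xi) auto
  have "ws (Fun (Cond f i 1) (map (subst \<sigma> \<circ> emb) ls @
      repl_at (repl_at (map \<sigma> xs) i [hconst Top]) i
        (map (subst \<sigma> \<circ> emb \<circ> snd) (take (1 - 1) conds) @ [subst \<sigma> (xi m Top (fst (conds ! 0)))])))"
    by (rule ws_cond[OF assms(1,2,3)]) (use O ls a1 assms P(2) in \<open>auto simp: Suc_le_eq\<close>)
  then show ?thesis using assms(1,2,5) by (simp add: repl_at_repl_at)
qed

lemma ws_Xi3_step:
  assumes "1 \<le> i" "i \<le> m f" "enum f ! (i - 1) = (Fun f ls, r, conds)" "conds \<noteq> []"
    "length xs = m f"
    "ws (subst \<sigma> (Fun (Cond f i (length conds))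
       (map emb ls @ repl_at (map Var xs) i (map (emb \<circ> snd) conds))))"
  shows "ws (subst \<sigma> (xi m Top r))"
proof -
  note P = enum_props[OF assms(1-3)]
  have "\<forall>x \<in> vars (Fun f ls) \<union> \<Union> (set (map (vars \<circ> snd) conds)). ws (\<sigma> x)"
    using ws_Cond_satisfiedD(1)[OF assms(1-3,5), of "length conds"] assms(4,6)
    by (simp add: Suc_le_eq)
  then show ?thesis using P(4,9) by (intro ws_subst_xi) auto
qed

lemma ws_Xi4_step:
  assumes "1 \<le> i" "i \<le> m f" "enum f ! (i - 1) = (Fun f ls, r, conds)" "1 \<le> j" "j < length conds"
    "length xs = m f"
    "ws (subst \<sigma> (Fun (Cond f i j)
       (map emb ls @ repl_at (map Var xs) i (map (emb \<circ> snd) (take j conds)))))"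
  shows "ws (subst \<sigma> (Fun (Cond f i (Suc j)) (map emb ls @ repl_at (map Var xs) i
    (map (emb \<circ> snd) (take j conds) @ [xi m Top (fst (conds ! j))]))))"
proof -
  note P = enum_props[OF assms(1-3)]
  note S = ws_Cond_satisfiedD[OF assms(1,2,3,6,4) _ assms(7)]
  have vs: "\<forall>x \<in> vars (Fun f ls) \<union> \<Union> (set (map (vars \<circ> snd) (take j conds))). ws (\<sigma> x)"
    and fl: "set (repl_at (map \<sigma> xs) i [hconst Bot]) \<subseteq> {hconst Bot, hconst Top}"
    using S assms(5,6) by auto
  have "wf_term F ar (fst (conds ! j))" using P(5) nth_mem[OF assms(5)] by (cases "conds ! j") fastforce
  then have aj: "ws (subst \<sigma> (xi m Top (fst (conds ! j))))"
    using vs P(10)[rule_format, OF assms(5)] by (intro ws_subst_xi) auto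
  have "ws (Fun (Cond f i (Suc j)) (map (subst \<sigma> \<circ> emb) ls @
      repl_at (repl_at (map \<sigma> xs) i [hconst Bot]) i
        (map (subst \<sigma> \<circ> emb \<circ> snd) (take (Suc j - 1) conds) @ [subst \<sigma> (xi m Top (fst (conds ! j)))])))"
    by (rule ws_cond[OF assms(1,2,3)]) (use assms P(2) vs fl aj in \<open>auto simp: Suc_le_eq\<close>)
  then show ?thesis using assms(1,2,6) by (simp add: repl_at_repl_at comp_assoc)
qed

lemma ws_Xi5_step:
  assumes "1 \<le> i" "i \<le> m f" "enum f ! (i - 1) = (Fun f ls, r, conds)" "1 \<le> j" "j \<le> length conds"
    "length xs = m f"
    "ws (subst \<sigma> (Fun (Cond f i j) (map emb ls @ repl_at (map Var xs) i
       (map (emb \<circ> snd) (take (j - 1) conds) @ [v]))))"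
  shows "ws (subst \<sigma> (Fun (Orig f) (map emb ls @ repl_at (map Var xs) i [hconst Bot])))"
proof -
  note P = enum_props[OF assms(1-3)]
  have "ws (Fun (Cond f i j) (map (subst \<sigma> \<circ> emb) ls @ repl_at (map \<sigma> xs) i
      (map (subst \<sigma> \<circ> emb \<circ> snd) (take (j - 1) conds) @ [subst \<sigma> v])))"
    using assms(7) by (simp add: comp_assoc)
  note C = ws_CondD[OF assms(1,2,3,6,4,5) this]
  have "\<forall>s \<in> set (map (subst \<sigma> \<circ> emb) ls). ws s" using C(1) P(3) ws_subst_emb by fastforce
  then have "ws (Fun (Orig f) (map (subst \<sigma> \<circ> emb) ls @ repl_at (map \<sigma> xs) i [hconst Bot]))"
    using P(1,2) C(3) assms(1,2,6) defined_if_enum by (intro ws_def) auto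
  then show ?thesis by simp
qed

lemma ws_Xi6_step:
  assumes "1 \<le> i" "i \<le> m f" "enum f ! (i - 1) = (Fun f ls, r, conds)" "1 \<le> j" "j \<le> length ls"
    "length xs = m f" "length ys = length ls"
    "ws (subst \<sigma> (Fun (Orig f) (repl_at (map Var ys) j [v] @ repl_at (map Var xs) i [hconst Top])))"
  shows "ws (subst \<sigma> (Fun (Orig f) (repl_at (map Var ys) j [v] @ repl_at (map Var xs) i [hconst Bot])))"
proof -
  note P = enum_props[OF assms(1-3)]
  have d: "defined R f" using defined_if_enum assms by blast
  have len: "length (repl_at (map \<sigma> ys) j [subst \<sigma> v]) = ar f" using assms(4,5,7) P(2) by simp
  have "ws (Fun (Orig f) (repl_at (map \<sigma> ys) j [subst \<sigma> v] @ repl_at (map \<sigma> xs) i [hconst Top]))"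
    using assms(8) by simp
  note O = ws_Orig_definedD[OF this d len]
  have "ws (Fun (Orig f) (repl_at (map \<sigma> ys) j [subst \<sigma> v] @
      repl_at (repl_at (map \<sigma> xs) i [hconst Top]) i [hconst Bot]))"
    using O len d P(1) flags_repl_at[OF O(2), of Bot i] assms(1,2,6)
    by (intro ws_def) (auto simp: repl_at_repl_at)
  then show ?thesis using assms(1,2,6) by (simp add: repl_at_repl_at)
qed

lemma ws_root_step:
  assumes "(l, r) \<in> Xi F ar R enum" "ws (subst \<sigma> l)"
  shows "ws (subst \<sigma> r)"
  using assms
  by (cases rule: Xi.cases)
    (metis ws_Xi1_step ws_Xi2_step ws_Xi3_step ws_Xi4_step ws_Xi5_step ws_Xi6_step)+

lemma nth_Cond_arg:
  assumes "length A = n" "1 \<le> i" "i \<le> length cs" "length X = j - 1" "1 \<le> j"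
  shows "(A @ repl_at cs i (X @ [u])) ! (n + i + j - 1 - 1) = u"
    "(A @ repl_at cs i (X @ [u]))[n + i + j - 1 - 1 := u'] = A @ repl_at cs i (X @ [u'])"
proof -
  have e: "n + i + j - 1 - 1 = length A + (length (take (i - 1) cs) + length X)" using assms by simp
  show "(A @ repl_at cs i (X @ [u])) ! (n + i + j - 1 - 1) = u"
    unfolding e repl_at_def by (simp add: nth_append del: length_take)
  show "(A @ repl_at cs i (X @ [u]))[n + i + j - 1 - 1 := u'] = A @ repl_at cs i (X @ [u'])"
    unfolding e repl_at_def by (simp add: list_update_append del: length_take)
qed

lemma ws_arg_step:
  assumes "ws (Fun g ts)" "i \<in> mu ar g" "1 \<le> i" "i \<le> length ts" "ws (ts ! (i - 1)) \<Longrightarrow> ws u"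
  shows "ws (Fun g (ts[i - 1 := u]))"
  using assms(1)
proof (cases rule: well_shaped.cases)
  case ws_con
  then show ?thesis
    using assms by (auto intro!: well_shaped.ws_con dest!: set_update_subset_insert[THEN subsetD])
next
  case (ws_def f ss cs)
  then have "i - 1 < length ss" using assms(2,3) by auto
  then show ?thesis using ws_def assms
    by (auto simp: list_update_append nth_append intro!: well_shaped.ws_def
        dest!: set_update_subset_insert[THEN subsetD])
next
  case (ws_cond i' f ls r conds j cs \<sigma> u0)
  let ?A = "map (subst \<sigma> \<circ> emb) ls" and ?X = "map (subst \<sigma> \<circ> emb \<circ> snd) (take (j - 1) conds)"
  have i: "i = length ?A + i' + j - 1" and lX: "length ?X = j - 1" using ws_cond assms(2) by auto
  note arg = nth_Cond_arg[of ?A "length ?A" i' cs ?X j, OF refl]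
  have "ws u" using assms(5) arg(1) ws_cond i lX by simp
  then have "ws (Fun (Cond f i' j) (?A @ repl_at cs i' (?X @ [u])))"
    by (intro well_shaped.ws_cond[where r = r]) (use ws_cond in auto)
  then show ?thesis using ws_cond i arg(2) lX by simp
qed

lemma ws_cs_step: "step s t \<Longrightarrow> ws s \<Longrightarrow> ws t"
proof (induction rule: cs_step.induct)
  case (cs_root l r \<sigma>)
  then show ?case by (rule ws_root_step)
next
  case (cs_arg i g ts u)
  then show ?case using ws_arg_step by blast
qed

lemma ws_cs_steps: "step\<^sup>*\<^sup>* s t \<Longrightarrow> ws s \<Longrightarrow> ws t"
  by (induction rule: rtranclp_induct) (auto intro: ws_cs_step)

lemma anti_pattern_root_clash:
  fixes us :: "('f, 'v) trm list"
  assumes "finite V" "g \<in> F" "length us = ar g" "defined R g \<or> g \<noteq> f"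
  shows "\<exists>v \<sigma>. AP F ar R m (Fun f ts) v \<and> vars v \<inter> V = {} \<and> subst \<sigma> v = xi m Bot (Fun g us)"
proof -
  obtain xs where xs: "length xs = ar g" "distinct xs" "set xs \<inter> V = {}"
    using exists_fresh_vars[OF infinite_vars assms(1)] by blast
  let ?\<sigma> = "upds Var xs (map (xi m Bot) us)"
  have args: "map ?\<sigma> xs = map (xi m Bot) us" using map_upds_self[OF xs(2), of "map (xi m Bot) us" Var] xs(1) assms(3) by simp
  show ?thesis
  proof (cases "defined R g")
    case True
    let ?v = "Fun (Orig g) (map Var xs @ replicate (m g) (hconst Bot))"
    have "AP F ar R m (Fun f ts) ?v" using assms(2) True xs by (intro AP_def) auto
    moreover have "subst ?\<sigma> ?v = xi m Bot (Fun g us)" using args by (simp add: map_replicate_const)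
    ultimately show ?thesis using xs(3) by (intro exI[of _ ?v] exI[of _ ?\<sigma>]) auto
  next
    case False
    let ?v = "Fun (Orig g) (map Var xs)"
    have "AP F ar R m (Fun f ts) ?v" using assms False xs by (intro AP_con) auto
    moreover have "subst ?\<sigma> ?v = xi m Bot (Fun g us)" using args False by (simp add: mf_constructor)
    ultimately show ?thesis using xs(3) by (intro exI[of _ ?v] exI[of _ ?\<sigma>]) auto
  qed
qed

lemma anti_pattern_arg:
  assumes "finite V" "k < length ts" "length us = length ts" "AP F ar R m (ts ! k) v"
    "vars v \<inter> V = {}" "subst \<sigma> v = us ! k"
  shows "\<exists>p \<tau>. AP F ar R m (Fun f ts) p \<and> vars p \<inter> V = {} \<and> subst \<tau> p = Fun (Orig f) us"
proof -
  obtain xs where xs: "length xs = length ts" "distinct xs" "set xs \<inter> (V \<union> vars v) = {}"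
    using exists_fresh_vars[OF infinite_vars, of "V \<union> vars v"] assms(1) by auto
  let ?p = "Fun (Orig f) (repl_at (map Var xs) (Suc k) [v])"
  let ?\<tau> = "upds \<sigma> xs us"
  have "AP F ar R m (Fun f ts) ?p" using assms(2,4) xs by (intro AP_arg) auto
  moreover have "vars ?p \<subseteq> set xs \<union> vars v"
    using set_repl_at_subset[of "map Var xs" "Suc k" "[v]"] by (auto simp del: map_repl_at)
  then have "vars ?p \<inter> V = {}" using xs(3) assms(5) by auto
  moreover have "subst ?\<tau> ?p = Fun (Orig f) us"
  proof -
    have "subst ?\<tau> v = us ! k" using subst_upds_disjoint[of v xs \<sigma>] xs(3) assms(6) by auto
    moreover have "map ?\<tau> xs = us" using map_upds_self[OF xs(2), of us \<sigma>] xs(1) assms(3) by simp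
    ultimately have "subst ?\<tau> ?p = Fun (Orig f) (repl_at us (Suc k) [us ! (Suc k - 1)])"
      by simp
    then show ?thesis using repl_at_nth_self[of "Suc k" us] assms(2,3) by simp
  qed
  ultimately show ?thesis by blast
qed

lemma match_or_anti_pattern:
  "constructor_term R l \<Longrightarrow> wf_term F ar l \<Longrightarrow> linear l \<Longrightarrow> wf_term F ar (w :: ('f, 'v) trm) \<Longrightarrow>
   vars w = {} \<Longrightarrow> finite V \<Longrightarrow>
   (\<exists>\<sigma>. subst \<sigma> (emb l) = xi m Bot w) \<or>
   (\<exists>v \<sigma>. AP F ar R m l v \<and> vars v \<inter> V = {} \<and> subst \<sigma> v = xi m Bot w)"
proof (induction l arbitrary: w)
  case (Var x)
  then show ?case by (intro disjI1 exI[of _ "\<lambda>_. xi m Bot w"]) simp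
next
  case (Fun f ts)
  obtain g us where w: "w = Fun g us" using Fun.prems(5) by (cases w) auto
  have nd: "\<not> defined R f" and cts: "\<forall>t \<in> set ts. constructor_term R t"
    using Fun.prems(1) by (auto simp: constructor_term_Fun)
  have g: "g \<in> F" "length us = ar g" "\<forall>w \<in> set us. wf_term F ar w \<and> vars w = {}"
    using Fun.prems(4,5) w by auto
  show ?case
  proof (cases "defined R g \<or> g \<noteq> f")
    case True
    then show ?thesis using anti_pattern_root_clash[OF Fun.prems(6) g(1,2)] w by blast
  next
    case False
    then have gf: "g = f" by blast
    have lts: "length us = length ts" using Fun.prems(2) g(2) gf by simp
    have xi_w: "xi m Bot w = Fun (Orig f) (map (xi m Bot) us)"
      using w gf mf_constructor[OF nd] by simp
    show ?thesis
    proof (cases "\<forall>k < length ts. \<exists>\<sigma>. subst \<sigma> (emb (ts ! k)) = xi m Bot (us ! k)")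
      case True
      have "\<exists>\<sigma>. map (subst \<sigma>) (map emb ts) = map (xi m Bot) us"
        using Fun.prems(3) lts True by (intro match_linear_list) (auto simp: linear_def comp_def)
      then show ?thesis using xi_w by auto
    next
      case False
      then obtain k where k: "k < length ts"
        and no_match: "\<not> (\<exists>\<sigma>. subst \<sigma> (emb (ts ! k)) = xi m Bot (us ! k))" by blast
      have tk: "ts ! k \<in> set ts" and uk: "us ! k \<in> set us" using k lts by auto
      have "(\<exists>\<sigma>. subst \<sigma> (emb (ts ! k)) = xi m Bot (us ! k)) \<or>
          (\<exists>v \<sigma>. AP F ar R m (ts ! k) v \<and> vars v \<inter> V = {} \<and> subst \<sigma> v = xi m Bot (us ! k))"
        using cts tk Fun.prems(2,6) linear_arg[OF Fun.prems(3) tk] g(3) uk by (intro Fun.IH[OF tk]) auto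
      then obtain v \<sigma> where "AP F ar R m (ts ! k) v" "vars v \<inter> V = {}"
        "subst \<sigma> v = map (xi m Bot) us ! k"
        using no_match k lts by auto
      from anti_pattern_arg[OF Fun.prems(6) k _ this] lts xi_w show ?thesis by auto
    qed
  qed
qed

lemma Top_flag_match_reducible:
  assumes "1 \<le> i" "i \<le> m f" "enum f ! (i - 1) = (Fun f ls, r, conds)" "length cs = m f"
    "cs ! (i - 1) = hconst Top" "map (subst \<sigma>\<^sub>l \<circ> emb) ls = us"
  shows "\<exists>u. step (Fun (Orig f) (us @ cs)) u"
proof -
  obtain xs where xs: "length xs = m f" "distinct xs" "set xs \<inter> rule_vars (enum f ! (i - 1)) = {}"
    using exists_fresh_vars[OF infinite_vars finite_rule_vars] by blast
  define \<sigma> where "\<sigma> = upds \<sigma>\<^sub>l xs cs"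
  have "vars (emb l) \<inter> set xs = {}" if "l \<in> set ls" for l
    using that xs(3) rule_vars_lhs[of f ls r conds] assms(3) by auto
  then have "map (subst \<sigma> \<circ> emb) ls = map (subst \<sigma>\<^sub>l \<circ> emb) ls"
    by (simp add: \<sigma>_def subst_upds_disjoint)
  moreover have "map \<sigma> xs = cs" using map_upds_self[OF xs(2), of cs \<sigma>\<^sub>l] xs(1) assms(4) by (simp add: \<sigma>_def)
  moreover have "repl_at cs i [hconst Top] = cs"
    using repl_at_nth_self[of i cs] assms(1,2,4,5) by simp
  ultimately have redex: "subst \<sigma> (Fun (Orig f) (map emb ls @ repl_at (map Var xs) i [hconst Top])) =
      Fun (Orig f) (us @ cs)"
    using assms(6) by simp
  show ?thesis
  proof (cases "conds = []")
    case True
    then have "(Fun (Orig f) (map emb ls @ repl_at (map Var xs) i [hconst Top]), xi m Top r) \<in> Xi F ar R enum"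
      using assms(1-3) xs by (intro Xi1) auto
    then show ?thesis using cs_root redex by metis
  next
    case False
    then have "(Fun (Orig f) (map emb ls @ repl_at (map Var xs) i [hconst Top]),
        Fun (Cond f i 1) (map emb ls @ repl_at (map Var xs) i [xi m Top (fst (conds ! 0))]))
      \<in> Xi F ar R enum"
      using assms(1-3) xs by (intro Xi2) auto
    then show ?thesis using cs_root redex by metis
  qed
qed

lemma Top_flag_anti_pattern_reducible:
  assumes "1 \<le> i" "i \<le> m f" "enum f ! (i - 1) = (Fun f ls, r, conds)" "length cs = m f"
    "cs ! (i - 1) = hconst Top" "k < length ls" "length us = length ls"
    "AP F ar R m (ls ! k) v" "subst \<sigma>\<^sub>v v = us ! k"
  shows "\<exists>u. step (Fun (Orig f) (us @ cs)) u"
proof -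
  obtain zs where zs: "length zs = m f + length ls" "distinct zs" "set zs \<inter> vars v = {}"
    using exists_fresh_vars[OF infinite_vars, of "vars v"] by auto
  define xs where "xs = take (m f) zs"
  define ys where "ys = drop (m f) zs"
  have xs_ys: "xs @ ys = zs" "length xs = m f" "length ys = length ls"
    using zs(1) by (auto simp: xs_def ys_def)
  define \<sigma> where "\<sigma> = upds \<sigma>\<^sub>v zs (cs @ us)"
  have "map \<sigma> xs @ map \<sigma> ys = cs @ us"
    using map_upds_self[OF zs(2), of "cs @ us" \<sigma>\<^sub>v] zs(1) assms(4,7) xs_ys(1)
    by (simp add: \<sigma>_def flip: map_append)
  then have \<sigma>_xs: "map \<sigma> xs = cs" and \<sigma>_ys: "map \<sigma> ys = us"
    using xs_ys assms(4) by (auto simp: append_eq_append_conv)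
  have "subst \<sigma> v = us ! k"
    using subst_upds_disjoint[of v zs \<sigma>\<^sub>v] zs(3) assms(9) by (auto simp: \<sigma>_def Int_commute)
  then have "subst \<sigma> (Fun (Orig f) (repl_at (map Var ys) (Suc k) [v] @ repl_at (map Var xs) i [hconst Top])) =
      Fun (Orig f) (repl_at us (Suc k) [us ! (Suc k - 1)] @ repl_at cs i [cs ! (i - 1)])"
    using \<sigma>_xs \<sigma>_ys assms(5) by simp
  also have "\<dots> = Fun (Orig f) (us @ cs)"
    using repl_at_nth_self[of "Suc k" us] repl_at_nth_self[of i cs] assms(1,2,4,6,7) by simp
  finally have redex: "subst \<sigma> (Fun (Orig f) (repl_at (map Var ys) (Suc k) [v] @
      repl_at (map Var xs) i [hconst Top])) = Fun (Orig f) (us @ cs)" .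
  have "set xs \<union> set ys = set zs" using xs_ys(1) by (metis set_append)
  then have "(Fun (Orig f) (repl_at (map Var ys) (Suc k) [v] @ repl_at (map Var xs) i [hconst Top]),
      Fun (Orig f) (repl_at (map Var ys) (Suc k) [v] @ repl_at (map Var xs) i [hconst Bot]))
    \<in> Xi F ar R enum"
    using assms(1-3,6,8) xs_ys zs by (intro Xi6[where r = r and cs = conds]) auto
  then show ?thesis using cs_root redex by metis
qed

lemma Top_flag_reducible:
  assumes "1 \<le> i" "i \<le> m f" "length ts = ar f" "\<forall>t \<in> set ts. wf_term F ar t \<and> vars t = {}"
    "length cs = m f" "cs ! (i - 1) = hconst Top"
  shows "\<exists>u. step (Fun (Orig f) (map (xi m Bot) ts @ cs)) u"
proof -
  obtain ls r conds where \<rho>: "enum f ! (i - 1) = (Fun f ls, r, conds)"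
    using enum_shape[OF assms(1,2)] by blast
  note P = enum_props[OF assms(1,2) \<rho>]
  have len: "length ls = length ts" using P(2) assms(3) by simp
  show ?thesis
  proof (cases "\<forall>k < length ls. \<exists>\<sigma>. subst \<sigma> (emb (ls ! k)) = xi m Bot (ts ! k)")
    case True
    have "\<exists>\<sigma>. map (subst \<sigma>) (map emb ls) = map (xi m Bot) ts"
      using P(6) len True by (intro match_linear_list) (auto simp: linear_def comp_def)
    then obtain \<sigma> where "map (subst \<sigma> \<circ> emb) ls = map (xi m Bot) ts" by auto
    then show ?thesis by (rule Top_flag_match_reducible[OF assms(1,2) \<rho> assms(5,6)])
  next
    case False
    then obtain k where k: "k < length ls"
      and no_match: "\<not> (\<exists>\<sigma>. subst \<sigma> (emb (ls ! k)) = xi m Bot (ts ! k))" by blast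
    have "ls ! k \<in> set ls" "ts ! k \<in> set ts" using k len by auto
    then have "(\<exists>\<sigma>. subst \<sigma> (emb (ls ! k)) = xi m Bot (ts ! k)) \<or>
        (\<exists>v \<sigma>. AP F ar R m (ls ! k) v \<and> vars v \<inter> {} = {} \<and> subst \<sigma> v = xi m Bot (ts ! k))"
      using P(3) linear_arg[OF P(6)] assms(4) by (intro match_or_anti_pattern) auto
    then obtain v \<sigma> where "AP F ar R m (ls ! k) v" "subst \<sigma> v = map (xi m Bot) ts ! k"
      using no_match k len by auto
    then show ?thesis
      using Top_flag_anti_pattern_reducible[OF assms(1,2) \<rho> assms(5,6) k] len by simp
  qed
qed

lemma enum_cond_rhs_disjoint:
  assumes "1 \<le> i" "i \<le> m f" "enum f ! (i - 1) = (Fun f ls, r, conds)" "1 \<le> j" "j \<le> length conds"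
  shows "vars (snd (conds ! (j - 1))) \<inter>
    (vars (Fun f ls) \<union> \<Union> (set (map (vars \<circ> snd) (take (j - 1) conds)))) = {}"
proof -
  note P = enum_props[OF assms(1-3)]
  have j: "j - 1 < length conds" using assms(4,5) by simp
  have "vars (snd (conds ! (j - 1))) \<inter> vars (snd c) = {}" if "c \<in> set (take (j - 1) conds)" for c
  proof -
    from that obtain k where "k < length (take (j - 1) conds)" "take (j - 1) conds ! k = c"
      by (auto simp: in_set_conv_nth)
    then have "k < j - 1" "c = conds ! k" by auto
    then show ?thesis using P(8)[rule_format, of k "j - 1"] j by auto
  qed
  then show ?thesis using P(7)[rule_format, OF j] by fastforce
qed

lemma Cond_instance:
  assumes "1 \<le> i" "i \<le> m f" "enum f ! (i - 1) = (Fun f ls, r, conds)" "length cs = m f"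
    "vars p \<inter> (vars (Fun f ls) \<union> \<Union> (set (map (vars \<circ> snd) (take (j - 1) conds)))) = {}"
  obtains xs \<sigma> where "length xs = m f" "distinct xs" "set xs \<inter> rule_vars (enum f ! (i - 1)) = {}"
    "vars p \<inter> set xs = {}" "subst \<sigma> (Fun (Cond f i j) (map emb ls @
        repl_at (map Var xs) i (map (emb \<circ> snd) (take (j - 1) conds) @ [p]))) =
     Fun (Cond f i j) (map (subst \<sigma>\<^sub>0 \<circ> emb) ls @
        repl_at cs i (map (subst \<sigma>\<^sub>0 \<circ> emb \<circ> snd) (take (j - 1) conds) @ [subst \<sigma>\<^sub>p p]))"
proof -
  define RV where "RV = rule_vars (enum f ! (i - 1))"
  define D where "D = vars (Fun f ls) \<union> \<Union> (set (map (vars \<circ> snd) (take (j - 1) conds)))"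
  have D_RV: "D \<subseteq> RV" unfolding D_def RV_def assms(3) by (rule rule_vars_prefix)
  have "finite (RV \<union> vars p)" by (simp add: RV_def finite_rule_vars)
  then obtain xs where xs: "length xs = m f" "distinct xs" "set xs \<inter> (RV \<union> vars p) = {}"
    using exists_fresh_vars[OF infinite_vars] by blast
  define \<tau> where "\<tau> x = (if x \<in> vars p then \<sigma>\<^sub>p x else \<sigma>\<^sub>0 x)" for x
  define \<sigma> where "\<sigma> = upds \<tau> xs cs"
  have agree: "subst \<sigma> (emb q) = subst \<sigma>\<^sub>0 (emb q)" if "vars q \<subseteq> D" for q
  proof (rule subst_cong_vars)
    fix x assume "x \<in> vars (emb q)"
    then have "x \<in> D" using that by auto
    then have "x \<notin> set xs" "x \<notin> vars p" using D_RV xs(3) assms(5)[folded D_def] by auto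
    then show "\<sigma> x = \<sigma>\<^sub>0 x" by (simp add: \<sigma>_def \<tau>_def upds_notin)
  qed
  have ls: "map (subst \<sigma> \<circ> emb) ls = map (subst \<sigma>\<^sub>0 \<circ> emb) ls"
  proof (rule map_cong[OF refl])
    fix l assume "l \<in> set ls"
    then have "vars l \<subseteq> D" by (auto simp: D_def)
    then show "(subst \<sigma> \<circ> emb) l = (subst \<sigma>\<^sub>0 \<circ> emb) l" by (simp add: agree)
  qed
  have conds: "map (subst \<sigma> \<circ> emb \<circ> snd) (take (j - 1) conds) =
      map (subst \<sigma>\<^sub>0 \<circ> emb \<circ> snd) (take (j - 1) conds)"
  proof (rule map_cong[OF refl])
    fix c assume "c \<in> set (take (j - 1) conds)"
    then have "vars (snd c) \<subseteq> D" by (auto simp: D_def)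
    then show "(subst \<sigma> \<circ> emb \<circ> snd) c = (subst \<sigma>\<^sub>0 \<circ> emb \<circ> snd) c" by (simp add: agree)
  qed
  have p: "subst \<sigma> p = subst \<sigma>\<^sub>p p"
    using xs(3) subst_upds_disjoint[of p xs \<tau> cs] subst_cong_vars[of p \<tau> \<sigma>\<^sub>p]
    by (auto simp: \<sigma>_def \<tau>_def)
  have flags: "map \<sigma> xs = cs" using map_upds_self[OF xs(2), of cs \<tau>] xs(1) assms(4) by (simp add: \<sigma>_def)
  have "subst \<sigma> (Fun (Cond f i j) (map emb ls @
        repl_at (map Var xs) i (map (emb \<circ> snd) (take (j - 1) conds) @ [p]))) =
      Fun (Cond f i j) (map (subst \<sigma> \<circ> emb) ls @
        repl_at (map \<sigma> xs) i (map (subst \<sigma> \<circ> emb \<circ> snd) (take (j - 1) conds) @ [subst \<sigma> p]))"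
    by (simp add: comp_assoc)
  also have "\<dots> = Fun (Cond f i j) (map (subst \<sigma>\<^sub>0 \<circ> emb) ls @
        repl_at cs i (map (subst \<sigma>\<^sub>0 \<circ> emb \<circ> snd) (take (j - 1) conds) @ [subst \<sigma>\<^sub>p p]))"
    by (simp only: ls conds p flags)
  finally show ?thesis using xs by (intro that[of xs \<sigma>]) (auto simp: RV_def)
qed

lemma Cond_satisfied_reducible:
  assumes "1 \<le> i" "i \<le> m f" "enum f ! (i - 1) = (Fun f ls, r, conds)" "1 \<le> j" "j \<le> length conds"
    "length cs = m f" "subst \<sigma>\<^sub>b (emb (snd (conds ! (j - 1)))) = w"
  shows "\<exists>u. step (Fun (Cond f i j) (map (subst \<sigma>\<^sub>0 \<circ> emb) ls @
    repl_at cs i (map (subst \<sigma>\<^sub>0 \<circ> emb \<circ> snd) (take (j - 1) conds) @ [w]))) u"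
proof -
  have "vars (emb (snd (conds ! (j - 1)))) \<inter>
      (vars (Fun f ls) \<union> \<Union> (set (map (vars \<circ> snd) (take (j - 1) conds)))) = {}"
    using enum_cond_rhs_disjoint[OF assms(1-5)] by simp
  from Cond_instance[OF assms(1-3,6) this, of \<sigma>\<^sub>0 \<sigma>\<^sub>b]
  obtain xs \<sigma> where xs: "length xs = m f" "distinct xs" "set xs \<inter> rule_vars (enum f ! (i - 1)) = {}"
    "vars (emb (snd (conds ! (j - 1)))) \<inter> set xs = {}" and inst: "subst \<sigma> (Fun (Cond f i j) (map emb ls @ repl_at (map Var xs) i
        (map (emb \<circ> snd) (take (j - 1) conds) @ [emb (snd (conds ! (j - 1)))]))) =
      Fun (Cond f i j) (map (subst \<sigma>\<^sub>0 \<circ> emb) ls @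
        repl_at cs i (map (subst \<sigma>\<^sub>0 \<circ> emb \<circ> snd) (take (j - 1) conds) @ [w]))"
    unfolding assms(7) .
  let ?l = "Fun (Cond f i j) (map emb ls @ repl_at (map Var xs) i (map (emb \<circ> snd) (take j conds)))"
  have redex: "subst \<sigma> ?l = Fun (Cond f i j) (map (subst \<sigma>\<^sub>0 \<circ> emb) ls @
      repl_at cs i (map (subst \<sigma>\<^sub>0 \<circ> emb \<circ> snd) (take (j - 1) conds) @ [w]))"
    using inst map_take_Suc_last[OF assms(4,5), of "emb \<circ> snd"] by simp
  show ?thesis
  proof (cases "j = length conds")
    case True
    have "(Fun (Cond f i (length conds)) (map emb ls @ repl_at (map Var xs) i (map (emb \<circ> snd) conds)),
        xi m Top r) \<in> Xi F ar R enum"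
      using assms(1-5) xs by (intro Xi3) auto
    then have "(?l, xi m Top r) \<in> Xi F ar R enum" using True by simp
    then show ?thesis using cs_root redex by metis
  next
    case False
    then have "(?l, Fun (Cond f i (Suc j)) (map emb ls @ repl_at (map Var xs) i
        (map (emb \<circ> snd) (take j conds) @ [xi m Top (fst (conds ! j))]))) \<in> Xi F ar R enum"
      using assms xs by (intro Xi4) auto
    then show ?thesis using cs_root redex by metis
  qed
qed

lemma Cond_anti_pattern_reducible:
  assumes "1 \<le> i" "i \<le> m f" "enum f ! (i - 1) = (Fun f ls, r, conds)" "1 \<le> j" "j \<le> length conds"
    "length cs = m f" "AP F ar R m (snd (conds ! (j - 1))) v"
    "vars v \<inter> rule_vars (enum f ! (i - 1)) = {}" "subst \<sigma>\<^sub>v v = w"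
  shows "\<exists>u. step (Fun (Cond f i j) (map (subst \<sigma>\<^sub>0 \<circ> emb) ls @
    repl_at cs i (map (subst \<sigma>\<^sub>0 \<circ> emb \<circ> snd) (take (j - 1) conds) @ [w]))) u"
proof -
  have "vars v \<inter> (vars (Fun f ls) \<union> \<Union> (set (map (vars \<circ> snd) (take (j - 1) conds)))) = {}"
    using assms(8) rule_vars_prefix[of f ls "j - 1" conds r] assms(3) by auto
  from Cond_instance[OF assms(1-3,6) this, of \<sigma>\<^sub>0 \<sigma>\<^sub>v]
  obtain xs \<sigma> where xs: "length xs = m f" "distinct xs" "set xs \<inter> rule_vars (enum f ! (i - 1)) = {}"
    "vars v \<inter> set xs = {}" and redex: "subst \<sigma> (Fun (Cond f i j) (map emb ls @
        repl_at (map Var xs) i (map (emb \<circ> snd) (take (j - 1) conds) @ [v]))) =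
      Fun (Cond f i j) (map (subst \<sigma>\<^sub>0 \<circ> emb) ls @
        repl_at cs i (map (subst \<sigma>\<^sub>0 \<circ> emb \<circ> snd) (take (j - 1) conds) @ [w]))"
    unfolding assms(9) .
  have "(Fun (Cond f i j) (map emb ls @
        repl_at (map Var xs) i (map (emb \<circ> snd) (take (j - 1) conds) @ [v])),
      Fun (Orig f) (map emb ls @ repl_at (map Var xs) i [hconst Bot])) \<in> Xi F ar R enum"
    using assms(1-5,7,8) xs by (intro Xi5) auto
  then show ?thesis using cs_root redex by metis
qed

lemma Cond_reducible:
  assumes "1 \<le> i" "i \<le> m f" "enum f ! (i - 1) = (Fun f ls, r, conds)" "1 \<le> j" "j \<le> length conds"
    "length cs = m f" "wf_term F ar w" "vars w = {}"
  shows "\<exists>u. step (Fun (Cond f i j) (map (subst \<sigma>\<^sub>0 \<circ> emb) ls @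
    repl_at cs i (map (subst \<sigma>\<^sub>0 \<circ> emb \<circ> snd) (take (j - 1) conds) @ [xi m Bot w]))) u"
proof -
  have "conds ! (j - 1) \<in> set conds" using assms(4,5) by simp
  then have b: "constructor_term R (snd (conds ! (j - 1)))" "wf_term F ar (snd (conds ! (j - 1)))"
    "linear (snd (conds ! (j - 1)))"
    using enum_props(5)[OF assms(1-3)] by fastforce+
  from match_or_anti_pattern[OF b assms(7,8) finite_rule_vars[of "enum f ! (i - 1)"]]
  consider \<sigma>\<^sub>b where "subst \<sigma>\<^sub>b (emb (snd (conds ! (j - 1)))) = xi m Bot w"
    | v \<sigma>\<^sub>v where "AP F ar R m (snd (conds ! (j - 1))) v"
        "vars v \<inter> rule_vars (enum f ! (i - 1)) = {}" "subst \<sigma>\<^sub>v v = xi m Bot w"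
    by blast
  then show ?thesis
  proof cases
    case 1
    then show ?thesis by (rule Cond_satisfied_reducible[OF assms(1-6)])
  next
    case 2
    then show ?thesis by (rule Cond_anti_pattern_reducible[OF assms(1-6)])
  qed
qed

lemma normal_form_arg:
  "\<not> (\<exists>u. step (Fun g ts) u) \<Longrightarrow> i \<in> mu ar g \<Longrightarrow> 1 \<le> i \<Longrightarrow> i \<le> length ts \<Longrightarrow>
   \<not> (\<exists>u. step (ts ! (i - 1)) u)"
  using cs_arg by blast

lemma normal_form_Orig_arg:
  assumes "\<not> (\<exists>u. step (Fun (Orig f) (ss @ cs)) u)" "length ss = ar f" "s \<in> set ss"
  shows "\<not> (\<exists>u. step s u)"
proof -
  obtain k where k: "k < length ss" "s = ss ! k" using assms(3) by (auto simp: in_set_conv_nth)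
  have "\<not> (\<exists>u. step ((ss @ cs) ! (Suc k - 1)) u)"
    using assms(2) k(1) by (intro normal_form_arg[OF assms(1)]) auto
  then show ?thesis using k by (simp add: nth_append)
qed

lemma ex_map_conv_pred: "\<forall>y \<in> set ys. \<exists>x. P x \<and> y = f x \<Longrightarrow> \<exists>xs. ys = map f xs \<and> (\<forall>x \<in> set xs. P x)"
proof (induction ys)
  case (Cons y ys)
  then obtain x xs where "P x" "y = f x" "ys = map f xs" "\<forall>x \<in> set xs. P x" by auto
  then show ?case by (intro exI[of _ "x # xs"]) auto
qed simp

lemma ws_normal_form_xi_Bot:
  "ws t \<Longrightarrow> \<not> (\<exists>u. step t u) \<Longrightarrow> \<exists>t'. wf_term F ar t' \<and> vars t' = {} \<and> t = xi m Bot t'"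
proof (induction rule: well_shaped.induct)
  case (ws_con f ss)
  have "\<forall>s \<in> set ss. \<exists>t'. (wf_term F ar t' \<and> vars t' = {}) \<and> s = xi m Bot t'"
    using ws_con.IH normal_form_Orig_arg[of f ss "[]"] ws_con.prems ws_con.hyps(3) by auto
  from ex_map_conv_pred[OF this]
  obtain ts where ts: "ss = map (xi m Bot) ts" "\<forall>t \<in> set ts. wf_term F ar t \<and> vars t = {}"
    by blast
  then show ?case using ws_con.hyps(1,3) mf_constructor[OF ws_con.hyps(2)]
    by (intro exI[of _ "Fun f ts"]) auto
next
  case (ws_def f ss cs)
  have "\<forall>s \<in> set ss. \<exists>t'. (wf_term F ar t' \<and> vars t' = {}) \<and> s = xi m Bot t'"
    using ws_def.IH normal_form_Orig_arg[OF ws_def.prems ws_def.hyps(3)] by auto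
  from ex_map_conv_pred[OF this]
  obtain ts where ts: "ss = map (xi m Bot) ts" "\<forall>t \<in> set ts. wf_term F ar t \<and> vars t = {}"
    by blast
  have "hconst Top \<notin> set cs"
  proof
    assume "hconst Top \<in> set cs"
    then obtain k where k: "k < length cs" "cs ! k = hconst Top" by (auto simp: in_set_conv_nth)
    have "\<exists>u. step (Fun (Orig f) (map (xi m Bot) ts @ cs)) u"
      using k ts ws_def.hyps by (intro Top_flag_reducible[of "Suc k"]) auto
    then show False using ws_def.prems ts(1) by simp
  qed
  then have "\<forall>c \<in> set cs. c = hconst Bot" using ws_def.hyps(5) by auto
  then have "cs = replicate (m f) (hconst Bot)"
    using replicate_length_same[of cs "hconst Bot"] ws_def.hyps(4) by simp
  then show ?case using ts ws_def.hyps(1,3) by (intro exI[of _ "Fun f ts"]) auto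
next
  case (ws_cond i f ls r conds j cs \<sigma> u)
  let ?A = "map (subst \<sigma> \<circ> emb) ls" and ?X = "map (subst \<sigma> \<circ> emb \<circ> snd) (take (j - 1) conds)"
  have lA: "length ?A = ar f" and lX: "length ?X = j - 1" using ws_cond.hyps by auto
  have "\<not> (\<exists>v. step ((?A @ repl_at cs i (?X @ [u])) ! (ar f + i + j - 1 - 1)) v)"
    using ws_cond.hyps lA lX by (intro normal_form_arg[OF ws_cond.prems]) (auto simp: repl_at_def)
  then have "\<not> (\<exists>v. step u v)" using nth_Cond_arg(1)[OF lA _ _ lX] ws_cond.hyps by simp
  then obtain w where w: "wf_term F ar w" "vars w = {}" "u = xi m Bot w" using ws_cond.IH by blast
  have "\<exists>v. step (Fun (Cond f i j) (?A @ repl_at cs i (?X @ [xi m Bot w]))) v"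
    by (rule Cond_reducible[OF ws_cond.hyps(1-3,5-7) w(1,2)])
  then show ?case using ws_cond.prems w(3) by simp
qed

end

theorem lemmaA:
  fixes F :: "'f set" and ar :: "'f \<Rightarrow> nat" and R :: "('f, 'v) crule set"
    and enum :: "'f \<Rightarrow> ('f, 'v) crule list"
    and s t :: "('f hsym, 'v) trm"
  assumes "infinite (UNIV :: 'v set)"
    and "strong_cctrs F ar R"
    and "\<forall>f. distinct (enum f) \<and> set (enum f) = rules_of R f"
    and "proper_ground F ar R enum s"
    and "(cs_step F ar R enum)\<^sup>*\<^sup>* s t"
    and "\<not> (\<exists>u. cs_step F ar R enum t u)"
  shows "bot_pattern F ar enum t"
proof -
  interpret strong_unraveling F ar R enum
    using assms(1-3) by unfold_locales
  have "ws s" using assms(4) ws_proper_ground unfolding proper_ground_def by blast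
  then have "ws t" using ws_cs_steps assms(5) by blast
  then obtain t' where "wf_term F ar t'" "vars t' = {}" "t = xi m Bot t'"
    using ws_normal_form_xi_Bot assms(6) by blast
  then show ?thesis unfolding bot_pattern_def by (auto intro: ground_linear)
qed

end
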